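(* Let $\Gamma$ be a $G$-distance-transitive graph of diameter $d$ with intersection array $\{b_0,\dots,b_{d-1};c_1,\dots,c_d\}$, and let $X,Y$ be vertices with $d(X,Y)=d$. Then $\Gamma$ is $G$-geodesic-transitive if and only if the stabilizer in $G$ of the ordered pair $(X,Y)$ acts transitively on the set $\mathcal{L}_{XY}$ of geodesics from $X$ to $Y$. Moreover, $|\mathcal{L}_{XY}|=c_1c_2\cdots c_d$.
   Context: All graphs are finite, simple, undirected, connected. A geodesic of length $\ell$ from $X$ to $Y$ is a vertex sequence $(X=v_0,\dots,v_\ell=Y)$ with consecutive vertices adjacent and $d(X,Y)=\ell$. For $G\le\mathrm{Aut}\,\Gamma$, $\Gamma$ is $G$-distance-transitive if $G$ is transitive on ordered pairs of vertices at distance $i$ for each $i$, and $G$-geodesic-transitive if $G$ is transitive on the set of geodesics of length $\ell$ for each $\ell\ge1$. The intersection array: for any $X,Y$ at distance $i$, exactly $c_i$ neighbours of $X$ lie at distance $i-1$ from $Y$ and exactly $b_i$ at distance $i+1$ from $Y$. *)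

theory Defs
  imports Main "HOL-Algebra.Bij"
begin

definition walk :: "'a set \<Rightarrow> ('a \<Rightarrow> 'a \<Rightarrow> bool) \<Rightarrow> 'a list \<Rightarrow> bool" where
  "walk V E xs \<longleftrightarrow> xs \<noteq> [] \<and> set xs \<subseteq> V \<and> successively E xs"

definition conn_graph :: "'a set \<Rightarrow> ('a \<Rightarrow> 'a \<Rightarrow> bool) \<Rightarrow> bool" where
  "conn_graph V E \<longleftrightarrow> finite V \<and> V \<noteq> {} \<and>
     (\<forall>x y. E x y \<longrightarrow> x \<in> V \<and> y \<in> V) \<and>
     (\<forall>x y. E x y \<longrightarrow> E y x) \<and> (\<forall>x. \<not> E x x) \<and>
     (\<forall>x\<in>V. \<forall>y\<in>V. \<exists>xs. walk V E xs \<and> hd xs = x \<and> last xs = y)"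

definition gdist :: "'a set \<Rightarrow> ('a \<Rightarrow> 'a \<Rightarrow> bool) \<Rightarrow> 'a \<Rightarrow> 'a \<Rightarrow> nat" where
  "gdist V E x y = (LEAST n. \<exists>xs. walk V E xs \<and> hd xs = x \<and> last xs = y \<and> length xs = n + 1)"

definition diameter :: "'a set \<Rightarrow> ('a \<Rightarrow> 'a \<Rightarrow> bool) \<Rightarrow> nat" where
  "diameter V E = Max {gdist V E x y | x y. x \<in> V \<and> y \<in> V}"

definition geodesic :: "'a set \<Rightarrow> ('a \<Rightarrow> 'a \<Rightarrow> bool) \<Rightarrow> 'a \<Rightarrow> 'a \<Rightarrow> 'a list \<Rightarrow> bool" where
  "geodesic V E x y xs \<longleftrightarrow> walk V E xs \<and> hd xs = x \<and> last xs = y \<and>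
     length xs = gdist V E x y + 1"

definition geodesics_between :: "'a set \<Rightarrow> ('a \<Rightarrow> 'a \<Rightarrow> bool) \<Rightarrow> 'a \<Rightarrow> 'a \<Rightarrow> 'a list set" where
  "geodesics_between V E x y = {xs. geodesic V E x y xs}"

definition geodesics_of_length :: "'a set \<Rightarrow> ('a \<Rightarrow> 'a \<Rightarrow> bool) \<Rightarrow> nat \<Rightarrow> 'a list set" where
  "geodesics_of_length V E l =
     {xs. \<exists>x\<in>V. \<exists>y\<in>V. geodesic V E x y xs \<and> length xs = l + 1}"

definition graph_aut :: "'a set \<Rightarrow> ('a \<Rightarrow> 'a \<Rightarrow> bool) \<Rightarrow> ('a \<Rightarrow> 'a) \<Rightarrow> bool" where
  "graph_aut V E g \<longleftrightarrow> g \<in> Bij V \<and> (\<forall>x\<in>V. \<forall>y\<in>V. E x y \<longleftrightarrow> E (g x) (g y))"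

definition aut_subgroup :: "'a set \<Rightarrow> ('a \<Rightarrow> 'a \<Rightarrow> bool) \<Rightarrow> ('a \<Rightarrow> 'a) set \<Rightarrow> bool" where
  "aut_subgroup V E G \<longleftrightarrow> subgroup G (BijGroup V) \<and> (\<forall>g\<in>G. graph_aut V E g)"

definition distance_transitive :: "'a set \<Rightarrow> ('a \<Rightarrow> 'a \<Rightarrow> bool) \<Rightarrow> ('a \<Rightarrow> 'a) set \<Rightarrow> bool" where
  "distance_transitive V E G \<longleftrightarrow>
     (\<forall>i. \<forall>x\<in>V. \<forall>y\<in>V. \<forall>u\<in>V. \<forall>v\<in>V.
        gdist V E x y = i \<and> gdist V E u v = i \<longrightarrow> (\<exists>g\<in>G. g x = u \<and> g y = v))"

definition geodesic_transitive :: "'a set \<Rightarrow> ('a \<Rightarrow> 'a \<Rightarrow> bool) \<Rightarrow> ('a \<Rightarrow> 'a) set \<Rightarrow> bool" where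
  "geodesic_transitive V E G \<longleftrightarrow>
     (\<forall>l\<ge>1. \<forall>p\<in>geodesics_of_length V E l. \<forall>q\<in>geodesics_of_length V E l.
        \<exists>g\<in>G. map g p = q)"

definition intersection_c :: "'a set \<Rightarrow> ('a \<Rightarrow> 'a \<Rightarrow> bool) \<Rightarrow> (nat \<Rightarrow> nat) \<Rightarrow> bool" where
  "intersection_c V E c \<longleftrightarrow>
     (\<forall>i\<in>{1..diameter V E}. \<forall>x\<in>V. \<forall>y\<in>V. gdist V E x y = i \<longrightarrow>
        card {z\<in>V. E x z \<and> gdist V E z y = i - 1} = c i)"

end

(* If d(x, y) = i, the geodesics from x to y are exactly x followed by a geodesic from one of
   the c_i neighbours z of x with d(z, y) = i - 1; induction on i gives c_1 c_2 ... c_i of them.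

   An automorphism mapping one geodesic from X to Y onto another fixes both endpoints, so
   geodesic-transitivity gives transitivity of the stabiliser of (X, Y). Conversely, in a
   distance-transitive graph a vertex at distance i < d from u has a neighbour at distance i + 1
   (transport an edge of a geodesic between a diametral pair), so every geodesic is a prefix of
   one of length d, which an element of G moves into the set of geodesics from X to Y. Two
   geodesics of equal length are thus carried into that set and there related by the
   stabiliser; the composite automorphism maps the one prefix onto the other. *)

theory Submission
  imports Defs
begin

section \<open>Walks and distance\<close>

lemma walk_append_tl:
  assumes "walk V E xs" "walk V E ys" "last xs = hd ys"
  shows "walk V E (xs @ tl ys)"
  using assms by (cases ys) (auto simp: walk_def successively_append_iff successively_Cons)

lemma walk_take: "walk V E xs \<Longrightarrow> 0 < n \<Longrightarrow> walk V E (take n xs)"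
  unfolding walk_def
  by (metis append_take_drop_id in_set_takeD subset_code(1) successively_append_iff take_eq_Nil2 not_gr0)

lemma walk_drop: "walk V E xs \<Longrightarrow> n < length xs \<Longrightarrow> walk V E (drop n xs)"
  unfolding walk_def
  by (metis append_take_drop_id in_set_dropD subset_code(1) successively_append_iff drop_eq_Nil2 not_le)

lemma gdist_less_length:
  assumes "walk V E xs"
  shows "gdist V E (hd xs) (last xs) < length xs"
proof -
  have "gdist V E (hd xs) (last xs) \<le> length xs - 1"
    unfolding gdist_def by (rule Least_le) (use assms in \<open>auto simp: walk_def\<close>)
  with assms show ?thesis by (cases xs) (auto simp: walk_def)
qed

lemma geodesic_exists:
  assumes "conn_graph V E" "x \<in> V" "y \<in> V"
  obtains xs where "geodesic V E x y xs"
proof -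
  obtain xs where "walk V E xs" "hd xs = x" "last xs = y"
    using assms unfolding conn_graph_def by blast
  then have "\<exists>n xs. walk V E xs \<and> hd xs = x \<and> last xs = y \<and> length xs = n + 1"
    by (intro exI[of _ "length xs - 1"] exI[of _ xs]) (auto simp: walk_def)
  then have "\<exists>xs. walk V E xs \<and> hd xs = x \<and> last xs = y \<and> length xs = gdist V E x y + 1"
    unfolding gdist_def by (rule LeastI_ex)
  then show ?thesis using that by (auto simp: geodesic_def)
qed

lemma geodesicD:
  assumes "geodesic V E x y xs"
  shows "walk V E xs" "xs \<noteq> []" "hd xs = x" "last xs = y" "length xs = gdist V E x y + 1"
    "set xs \<subseteq> V" "x \<in> V" "y \<in> V"
  using assms by (auto simp: geodesic_def walk_def)

lemma edge_in_V: "conn_graph V E \<Longrightarrow> E x y \<Longrightarrow> x \<in> V \<and> y \<in> V"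
  by (auto simp: conn_graph_def)

lemma gdist_self: "x \<in> V \<Longrightarrow> gdist V E x x = 0"
  using gdist_less_length[of V E "[x]"] by (simp add: walk_def)

lemma gdist_eq_0_iff:
  assumes "conn_graph V E" "x \<in> V" "y \<in> V"
  shows "gdist V E x y = 0 \<longleftrightarrow> x = y"
proof
  assume "gdist V E x y = 0"
  moreover obtain xs where "geodesic V E x y xs" using geodesic_exists[OF assms] .
  ultimately show "x = y" by (auto simp: geodesic_def length_Suc_conv)
qed (use assms gdist_self in auto)

lemma gdist_edge_le: "conn_graph V E \<Longrightarrow> E x y \<Longrightarrow> gdist V E x y \<le> 1"
  using gdist_less_length[of V E "[x, y]"] edge_in_V[of V E x y] by (simp add: walk_def)

lemma gdist_triangle:
  assumes "conn_graph V E" "x \<in> V" "y \<in> V" "z \<in> V"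
  shows "gdist V E x z \<le> gdist V E x y + gdist V E y z"
proof -
  obtain xs ys where "geodesic V E x y xs" "geodesic V E y z ys"
    using geodesic_exists assms by metis
  moreover from this have "last (xs @ tl ys) = z"
    by (cases ys) (auto simp: geodesic_def walk_def)
  ultimately have "walk V E (xs @ tl ys)" "hd (xs @ tl ys) = x" "last (xs @ tl ys) = z"
      "length (xs @ tl ys) = gdist V E x y + gdist V E y z + 1"
    by (auto simp: walk_append_tl geodesicD)
  then show ?thesis using gdist_less_length by fastforce
qed

lemma gdist_geodesic_nth:
  assumes "conn_graph V E" "geodesic V E x y xs" "k < length xs"
  shows "gdist V E x (xs ! k) = k"
proof -
  note xs = geodesicD[OF assms(2)]
  have "gdist V E x (xs ! k) < Suc k"
    using gdist_less_length[OF walk_take[OF xs(1), of "Suc k"]] xs assms(3)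
    by (simp add: hd_conv_nth last_conv_nth)
  moreover have "gdist V E (xs ! k) y < length xs - k"
    using gdist_less_length[OF walk_drop[OF xs(1) assms(3)]] xs assms(3)
    by (simp add: hd_drop_conv_nth)
  moreover have "gdist V E x y \<le> gdist V E x (xs ! k) + gdist V E (xs ! k) y"
    using gdist_triangle[OF assms(1)] xs assms(3) nth_mem by blast
  ultimately show ?thesis using xs(5) by linarith
qed

lemma finite_gdist_values:
  assumes "conn_graph V E"
  shows "finite {gdist V E x y | x y. x \<in> V \<and> y \<in> V}"
proof -
  have "{gdist V E x y | x y. x \<in> V \<and> y \<in> V} = (\<lambda>(x, y). gdist V E x y) ` (V \<times> V)"
    by auto
  then show ?thesis using assms by (simp add: conn_graph_def)
qed

lemma gdist_le_diameter:
  assumes "conn_graph V E" "x \<in> V" "y \<in> V"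
  shows "gdist V E x y \<le> diameter V E"
  using finite_gdist_values[OF assms(1)] unfolding diameter_def
  by (rule Max_ge) (use assms in auto)

lemma diameter_attained:
  assumes "conn_graph V E"
  obtains x y where "x \<in> V" "y \<in> V" "gdist V E x y = diameter V E"
proof -
  obtain v where "v \<in> V" using assms by (auto simp: conn_graph_def)
  then have "{gdist V E x y | x y. x \<in> V \<and> y \<in> V} \<noteq> {}" by blast
  from Max_in[OF finite_gdist_values[OF assms] this] obtain x y
    where "x \<in> V" "y \<in> V" "diameter V E = gdist V E x y"
    unfolding diameter_def by auto
  then show ?thesis using that by simp
qed

section \<open>Automorphisms\<close>

lemma graph_aut_walk:
  assumes "graph_aut V E g" "walk V E xs"
  shows "walk V E (map g xs)"
proof -
  have V: "set xs \<subseteq> V" and "successively E xs" using assms(2) by (auto simp: walk_def)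
  from \<open>successively E xs\<close> have "successively (\<lambda>a b. E (g a) (g b)) xs"
    by (rule successively_mono) (use assms(1) V in \<open>auto simp: graph_aut_def\<close>)
  moreover have "g \<in> V \<rightarrow> V" using assms(1) by (auto simp: graph_aut_def Bij_imp_funcset)
  ultimately show ?thesis using assms(2) V by (auto simp: walk_def successively_map)
qed

lemma graph_aut_inv:
  assumes "graph_aut V E g"
  shows "graph_aut V E (\<lambda>x\<in>V. inv_into V g x)"
proof -
  have g: "bij_betw g V V" "\<forall>x\<in>V. \<forall>y\<in>V. E x y \<longleftrightarrow> E (g x) (g y)"
    using assms by (auto simp: graph_aut_def Bij_def)
  have "E x y \<longleftrightarrow> E (inv_into V g x) (inv_into V g y)" if "x \<in> V" "y \<in> V" for x y
    using g that bij_betw_inv_into_right[OF g(1)] bij_betw_apply[OF bij_betw_inv_into[OF g(1)]]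
    by metis
  then show ?thesis
    using restrict_inv_into_Bij assms by (auto simp: graph_aut_def)
qed

lemma gdist_graph_aut_le:
  assumes "conn_graph V E" "graph_aut V E g" "x \<in> V" "y \<in> V"
  shows "gdist V E (g x) (g y) \<le> gdist V E x y"
proof -
  obtain xs where xs: "geodesic V E x y xs" using geodesic_exists[OF assms(1,3,4)] .
  show ?thesis
    using gdist_less_length[OF graph_aut_walk[OF assms(2) geodesicD(1)[OF xs]]] geodesicD[OF xs]
    by (simp add: hd_map last_map)
qed

lemma gdist_graph_aut:
  assumes "conn_graph V E" "graph_aut V E g" "x \<in> V" "y \<in> V"
  shows "gdist V E (g x) (g y) = gdist V E x y"
proof -
  have gV: "g x \<in> V" "g y \<in> V"
    using assms(2-4) by (auto simp: graph_aut_def dest!: Bij_imp_funcset)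
  have "bij_betw g V V" using assms(2) by (simp add: graph_aut_def Bij_def)
  then have "(\<lambda>x\<in>V. inv_into V g x) (g z) = z" if "z \<in> V" for z
    using that by (simp add: bij_betw_apply bij_betw_imp_inj_on)
  then have "gdist V E x y \<le> gdist V E (g x) (g y)"
    using gdist_graph_aut_le[OF assms(1) graph_aut_inv[OF assms(2)] gV] assms(3,4) by simp
  with gdist_graph_aut_le[OF assms] show ?thesis by simp
qed

lemma geodesic_graph_aut:
  assumes "conn_graph V E" "graph_aut V E g" "geodesic V E x y p"
  shows "geodesic V E (g x) (g y) (map g p)"
  using graph_aut_walk[OF assms(2) geodesicD(1)[OF assms(3)]] geodesicD[OF assms(3)]
    gdist_graph_aut[OF assms(1,2)]
  by (simp add: geodesic_def hd_map last_map)

lemma aut_subgroupD: "aut_subgroup V E G \<Longrightarrow> g \<in> G \<Longrightarrow> graph_aut V E g"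
  by (simp add: aut_subgroup_def)

lemma BijGroup_mult_apply:
  "g \<in> Bij V \<Longrightarrow> h \<in> Bij V \<Longrightarrow> x \<in> V \<Longrightarrow> (g \<otimes>\<^bsub>BijGroup V\<^esub> h) x = g (h x)"
  by (simp add: BijGroup_def compose_def)

lemma BijGroup_inv_apply: "g \<in> Bij V \<Longrightarrow> x \<in> V \<Longrightarrow> (inv\<^bsub>BijGroup V\<^esub> g) (g x) = x"
  by (auto simp: inv_BijGroup Bij_def bij_betw_def)

lemma BijGroup_one_apply: "x \<in> V \<Longrightarrow> \<one>\<^bsub>BijGroup V\<^esub> x = x"
  by (simp add: BijGroup_def)

section \<open>Extending geodesics in distance-transitive graphs\<close>

lemma distance_transitiveD:
  assumes "distance_transitive V E G" "x \<in> V" "y \<in> V" "u \<in> V" "v \<in> V"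
    "gdist V E x y = gdist V E u v"
  obtains g where "g \<in> G" "g x = u" "g y = v"
  using assms unfolding distance_transitive_def by blast

lemma distance_transitive_step:
  assumes "conn_graph V E" "aut_subgroup V E G" "distance_transitive V E G"
    "u \<in> V" "v \<in> V" "gdist V E u v < diameter V E"
  obtains w where "E v w" "gdist V E u w = Suc (gdist V E u v)"
proof -
  obtain X Y where XY: "X \<in> V" "Y \<in> V" "gdist V E X Y = diameter V E"
    using diameter_attained[OF assms(1)] .
  obtain P where P: "geodesic V E X Y P" using geodesic_exists[OF assms(1) XY(1,2)] .
  define i where "i = gdist V E u v"
  have i: "Suc i < length P" using geodesicD(5)[OF P] XY(3) assms(6) i_def by simp
  have Pi: "P ! i \<in> V" "P ! Suc i \<in> V" "E (P ! i) (P ! Suc i)"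
    using i geodesicD(1,6)[OF P] nth_mem[of i P] nth_mem[of "Suc i" P]
    by (auto simp: walk_def successively_nth)
  have "gdist V E X (P ! i) = gdist V E u v"
    using gdist_geodesic_nth[OF assms(1) P] i i_def by simp
  then obtain g where g: "g \<in> G" "g X = u" "g (P ! i) = v"
    using distance_transitiveD[OF assms(3) XY(1) Pi(1) assms(4,5)] by blast
  note g_aut = aut_subgroupD[OF assms(2) g(1)]
  show ?thesis
  proof
    show "E v (g (P ! Suc i))"
      using g_aut Pi g(3) by (auto simp: graph_aut_def)
    show "gdist V E u (g (P ! Suc i)) = Suc (gdist V E u v)"
      using gdist_graph_aut[OF assms(1) g_aut XY(1) Pi(2)] gdist_geodesic_nth[OF assms(1) P i]
        g(2) i_def by simp
  qed
qed

lemma distance_transitive_extend_geodesic: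
  assumes "conn_graph V E" "aut_subgroup V E G" "distance_transitive V E G"
    "geodesic V E u v p"
  obtains ys where "geodesic V E u (last (p @ ys)) (p @ ys)"
    "gdist V E u (last (p @ ys)) = diameter V E"
proof -
  have "\<exists>ys. geodesic V E u (last (p @ ys)) (p @ ys) \<and> gdist V E u (last (p @ ys)) = diameter V E"
    if "geodesic V E u v p" "diameter V E = gdist V E u v + n" for n v p
    using that
  proof (induction n arbitrary: v p)
    case 0
    then show ?case by (intro exI[of _ "[]"]) (simp add: geodesicD)
  next
    case (Suc n)
    note p = geodesicD[OF Suc.prems(1)]
    obtain w where w: "E v w" "gdist V E u w = Suc (gdist V E u v)"
      using distance_transitive_step[OF assms(1-3) p(7,8)] Suc.prems(2) by auto
    have "geodesic V E u w (p @ [w])"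
      using p w edge_in_V[OF assms(1) w(1)]
      by (auto simp: geodesic_def walk_def successively_append_iff)
    from Suc.IH[OF this] Suc.prems(2) w(2) obtain ys where
      "geodesic V E u (last (p @ w # ys)) (p @ w # ys)"
      "gdist V E u (last (p @ w # ys)) = diameter V E"
      by auto
    then show ?case by blast
  qed
  moreover have "diameter V E = gdist V E u v + (diameter V E - gdist V E u v)"
    using gdist_le_diameter[OF assms(1) geodesicD(7,8)[OF assms(4)]] by simp
  ultimately show ?thesis using that assms(4) by blast
qed

lemma distance_transitive_geodesic_into_diametral:
  assumes "conn_graph V E" "aut_subgroup V E G" "distance_transitive V E G"
    "geodesic V E u v p" "X \<in> V" "Y \<in> V" "gdist V E X Y = diameter V E"
  obtains g ys where "g \<in> G" "set (p @ ys) \<subseteq> V" "map g (p @ ys) \<in> geodesics_between V E X Y"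
proof -
  obtain ys where P: "geodesic V E u (last (p @ ys)) (p @ ys)"
    "gdist V E u (last (p @ ys)) = diameter V E"
    using distance_transitive_extend_geodesic[OF assms(1-4)] .
  obtain g where g: "g \<in> G" "g u = X" "g (last (p @ ys)) = Y"
    using distance_transitiveD[OF assms(3) geodesicD(7,8)[OF P(1)] assms(5,6)] P(2) assms(7)
    by metis
  have "geodesic V E X Y (map g (p @ ys))"
    using geodesic_graph_aut[OF assms(1) aut_subgroupD[OF assms(2) g(1)] P(1)] g(2,3) by simp
  then show ?thesis
    using g(1) geodesicD(6)[OF P(1)] by (intro that) (simp_all add: geodesics_between_def)
qed

section \<open>Counting geodesics\<close>

lemma finite_geodesics_between:
  assumes "conn_graph V E"
  shows "finite (geodesics_between V E x y)"
proof (rule finite_subset)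
  show "geodesics_between V E x y \<subseteq> {xs. set xs \<subseteq> V \<and> length xs = gdist V E x y + 1}"
    by (auto simp: geodesics_between_def geodesic_def walk_def)
  show "finite {xs. set xs \<subseteq> V \<and> length xs = gdist V E x y + 1}"
    using assms by (simp add: conn_graph_def finite_lists_length_eq)
qed

lemma geodesics_between_Suc:
  assumes "conn_graph V E" "x \<in> V" "y \<in> V" "gdist V E x y = Suc n"
  shows "geodesics_between V E x y =
    (\<Union>z\<in>{z\<in>V. E x z \<and> gdist V E z y = n}. (Cons x) ` geodesics_between V E z y)"
proof (intro equalityI subsetI)
  fix xs assume "xs \<in> geodesics_between V E x y"
  then have xs: "walk V E xs" "hd xs = x" "last xs = y" "length xs = Suc (Suc n)"
    using assms(4) by (auto simp: geodesics_between_def geodesic_def)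
  then obtain ys where "xs = x # ys"
    by (cases xs) (auto simp: walk_def)
  with xs(4) have ys: "xs = x # ys" "ys \<noteq> []" by auto
  have w: "walk V E ys" "E x (hd ys)" using xs(1) ys by (cases ys; auto simp: walk_def)+
  have "gdist V E (hd ys) y \<le> n"
    using gdist_less_length[OF w(1)] xs ys by simp
  moreover have "gdist V E x y \<le> gdist V E x (hd ys) + gdist V E (hd ys) y"
    using gdist_triangle[OF assms(1,2) _ assms(3)] edge_in_V[OF assms(1) w(2)] by blast
  ultimately have "gdist V E (hd ys) y = n"
    using gdist_edge_le[OF assms(1) w(2)] assms(4) by linarith
  then show "xs \<in> (\<Union>z\<in>{z\<in>V. E x z \<and> gdist V E z y = n}. (Cons x) ` geodesics_between V E z y)"
    using xs ys w edge_in_V[OF assms(1) w(2)]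
    by (auto simp: geodesics_between_def geodesic_def)
next
  fix xs assume "xs \<in> (\<Union>z\<in>{z\<in>V. E x z \<and> gdist V E z y = n}. (Cons x) ` geodesics_between V E z y)"
  then obtain z ys where "E x z" "gdist V E z y = n" "xs = x # ys" "geodesic V E z y ys"
    by (auto simp: geodesics_between_def)
  then show "xs \<in> geodesics_between V E x y"
    using assms(2,4) by (cases ys) (auto simp: geodesics_between_def geodesic_def walk_def)
qed

lemma card_geodesics_between:
  assumes "conn_graph V E" "intersection_c V E c" "x \<in> V" "y \<in> V"
  shows "card (geodesics_between V E x y) = (\<Prod>i=1..gdist V E x y. c i)"
  using assms(3)
proof (induction "gdist V E x y" arbitrary: x)
  case 0
  then have "x = y" using gdist_eq_0_iff[OF assms(1) 0(2) assms(4)] by simp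
  with 0 have "geodesics_between V E x y = {[x]}"
    by (auto simp: geodesics_between_def geodesic_def walk_def length_Suc_conv 0(1)[symmetric])
  then show ?case using 0 by (simp del: One_nat_def)
next
  case (Suc n)
  define S where "S = {z\<in>V. E x z \<and> gdist V E z y = n}"
  have "Suc n \<le> diameter V E"
    using gdist_le_diameter[OF assms(1) Suc.prems assms(4)] Suc.hyps(2) by simp
  then have cS: "card S = c (Suc n)"
    using assms(2) Suc.prems assms(4) Suc.hyps(2)[symmetric]
    unfolding intersection_c_def S_def by fastforce
  have "card (geodesics_between V E x y) = card (\<Union>z\<in>S. (Cons x) ` geodesics_between V E z y)"
    using geodesics_between_Suc[OF assms(1) Suc.prems assms(4) Suc.hyps(2)[symmetric]] S_def
    by simp
  also have "\<dots> = (\<Sum>z\<in>S. card ((Cons x) ` geodesics_between V E z y))"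
  proof (rule card_UN_disjoint)
    show "finite S" using assms(1) by (simp add: S_def conn_graph_def)
    show "\<forall>z\<in>S. finite ((Cons x) ` geodesics_between V E z y)"
      using finite_geodesics_between[OF assms(1)] by blast
    show "\<forall>z\<in>S. \<forall>z'\<in>S. z \<noteq> z' \<longrightarrow>
        (Cons x) ` geodesics_between V E z y \<inter> (Cons x) ` geodesics_between V E z' y = {}"
      by (auto simp: geodesics_between_def geodesic_def)
  qed
  also have "\<dots> = (\<Sum>z\<in>S. (\<Prod>i=1..n. c i))"
    by (rule sum.cong[OF refl]) (simp add: card_image S_def Suc.hyps(1))
  also have "\<dots> = (\<Prod>i=1..Suc n. c i)" using cS by (simp add: prod.nat_ivl_Suc')
  finally show ?case using Suc.hyps(2) by simp
qed

section \<open>Geodesic-transitivity\<close>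

lemma geodesic_transitive_imp_stabilizer_transitive:
  assumes "aut_subgroup V E G" "geodesic_transitive V E G"
    "p \<in> geodesics_between V E X Y" "q \<in> geodesics_between V E X Y"
  shows "\<exists>g\<in>G. g X = X \<and> g Y = Y \<and> map g p = q"
proof -
  note p = geodesicD[of V E X Y p] and q = geodesicD[of V E X Y q]
  have pq: "geodesic V E X Y p" "geodesic V E X Y q"
    using assms(3,4) by (simp_all add: geodesics_between_def)
  show ?thesis
  proof (cases "gdist V E X Y = 0")
    case True
    then have "p = [X]" "q = [X]" "Y = X"
      using p q pq by (auto simp: length_Suc_conv)
    moreover have "\<one>\<^bsub>BijGroup V\<^esub> \<in> G"
      using assms(1) by (simp add: aut_subgroup_def subgroup.one_closed)
    ultimately show ?thesis using BijGroup_one_apply p(7)[OF pq(1)] by force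
  next
    case False
    then have "p \<in> geodesics_of_length V E (gdist V E X Y)" "q \<in> geodesics_of_length V E (gdist V E X Y)"
      using p q pq by (auto simp: geodesics_of_length_def)
    with assms(2) False obtain g where g: "g \<in> G" "map g p = q"
      unfolding geodesic_transitive_def by (meson less_one not_le)
    moreover have "g X = X" "g Y = Y"
      using arg_cong[OF g(2), of hd] arg_cong[OF g(2), of last] p q pq
      by (simp_all add: hd_map last_map)
    ultimately show ?thesis by blast
  qed
qed

lemma diametral_geodesics_transitive_imp_geodesic_transitive:
  assumes "conn_graph V E" "aut_subgroup V E G" "distance_transitive V E G"
    "X \<in> V" "Y \<in> V" "gdist V E X Y = diameter V E"
    and L_transitive: "\<forall>p\<in>geodesics_between V E X Y. \<forall>q\<in>geodesics_between V E X Y. \<exists>g\<in>G. map g p = q"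
  shows "geodesic_transitive V E G"
  unfolding geodesic_transitive_def
proof (intro allI impI ballI)
  fix l p q assume "p \<in> geodesics_of_length V E l" "q \<in> geodesics_of_length V E l"
  then obtain u v u' v' where p: "geodesic V E u v p" "length p = l + 1"
    and q: "geodesic V E u' v' q" "length q = l + 1"
    by (auto simp: geodesics_of_length_def)
  obtain g1 ys1 where g1: "g1 \<in> G" "set (p @ ys1) \<subseteq> V" "map g1 (p @ ys1) \<in> geodesics_between V E X Y"
    using distance_transitive_geodesic_into_diametral[OF assms(1-3) p(1) assms(4-6)] .
  obtain g2 ys2 where g2: "g2 \<in> G" "set (q @ ys2) \<subseteq> V" "map g2 (q @ ys2) \<in> geodesics_between V E X Y"
    using distance_transitive_geodesic_into_diametral[OF assms(1-3) q(1) assms(4-6)] .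
  obtain h where h: "h \<in> G" "map h (map g1 (p @ ys1)) = map g2 (q @ ys2)"
    using L_transitive g1(3) g2(3) by blast
  have sg: "subgroup G (BijGroup V)" using assms(2) by (simp add: aut_subgroup_def)
  have Bij: "g1 \<in> Bij V" "g2 \<in> Bij V" "h \<in> Bij V"
    using aut_subgroupD[OF assms(2)] g1(1) g2(1) h(1) by (simp_all add: graph_aut_def)
  have "inv\<^bsub>BijGroup V\<^esub> g2 \<in> Bij V" "h \<otimes>\<^bsub>BijGroup V\<^esub> g1 \<in> Bij V"
    using group.inv_closed[OF group_BijGroup] Bij by (simp_all add: BijGroup_def compose_Bij)
  define k where "k = inv\<^bsub>BijGroup V\<^esub> g2 \<otimes>\<^bsub>BijGroup V\<^esub> (h \<otimes>\<^bsub>BijGroup V\<^esub> g1)"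
  have "k \<in> G" unfolding k_def
    using g1(1) g2(1) h(1) by (simp add: sg subgroup.m_closed subgroup.m_inv_closed)
  have "k x = (inv\<^bsub>BijGroup V\<^esub> g2) (h (g1 x))" if "x \<in> V" for x
    using that Bij \<open>inv\<^bsub>BijGroup V\<^esub> g2 \<in> Bij V\<close> \<open>h \<otimes>\<^bsub>BijGroup V\<^esub> g1 \<in> Bij V\<close>
    unfolding k_def by (simp add: BijGroup_mult_apply)
  then have "map k (p @ ys1) = map (inv\<^bsub>BijGroup V\<^esub> g2) (map h (map g1 (p @ ys1)))"
    using g1(2) by (auto intro!: map_cong)
  also have "\<dots> = q @ ys2"
    using h(2) g2(2) Bij(2) by (simp add: BijGroup_inv_apply map_idI subset_iff)
  finally have "map k p = q" using p(2) q(2) by (simp add: append_eq_append_conv)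
  with \<open>k \<in> G\<close> show "\<exists>g\<in>G. map g p = q" by blast
qed

theorem lemma3p1:
  fixes V :: "'a set" and E :: "'a \<Rightarrow> 'a \<Rightarrow> bool" and G :: "('a \<Rightarrow> 'a) set"
    and c :: "nat \<Rightarrow> nat" and d :: nat and X Y :: 'a
  assumes "conn_graph V E"
    and "aut_subgroup V E G"
    and "distance_transitive V E G"
    and "d = diameter V E"
    and "intersection_c V E c"
    and "X \<in> V" and "Y \<in> V" and "gdist V E X Y = d"
  shows "(geodesic_transitive V E G \<longleftrightarrow>
           (\<forall>p\<in>geodesics_between V E X Y. \<forall>q\<in>geodesics_between V E X Y.
              \<exists>g\<in>G. g X = X \<and> g Y = Y \<and> map g p = q))
         \<and> card (geodesics_between V E X Y) = (\<Prod>i=1..d. c i)"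
proof (intro conjI iffI ballI)
  show "\<exists>g\<in>G. g X = X \<and> g Y = Y \<and> map g p = q"
    if "geodesic_transitive V E G" "p \<in> geodesics_between V E X Y" "q \<in> geodesics_between V E X Y"
    for p q
    using geodesic_transitive_imp_stabilizer_transitive[OF assms(2) that] .
  show "geodesic_transitive V E G"
    if "\<forall>p\<in>geodesics_between V E X Y. \<forall>q\<in>geodesics_between V E X Y.
          \<exists>g\<in>G. g X = X \<and> g Y = Y \<and> map g p = q"
    using diametral_geodesics_transitive_imp_geodesic_transitive[OF assms(1-3,6,7)] that assms(4,8) by blast
  show "card (geodesics_between V E X Y) = (\<Prod>i=1..d. c i)"
    using card_geodesics_between[OF assms(1,5-7)] assms(8) by simp
qed

end
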